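(* Let $p\ge7$ be a prime. Then the cycle $C_{2p}$ admits an optimal extended irregular dominating set.
   Context: $C_m$ is the cycle on $m$ vertices. In a finite simple graph $\Gamma=(V,E)$ with distance $d$, a vertex $v$ carrying a non-negative integer label $\ell$ dominates (covers) exactly the vertices $u$ with $d(u,v)=\ell$; a vertex labeled $0$ dominates only itself. For $k\ge0$, a $k$-extended irregular dominating set is a set $S\subseteq V$ of $k$ vertices with a labeling $\lambda:S\to\mathbb{Z}_{\ge0}$ with distinct labels, such that every vertex of $V$ is dominated by some vertex of $S$; it is assumed that some vertex of $S$ has label $0$. $\gamma_e(\Gamma)$ is the minimum cardinality of such a set; a $k$-extended irregular dominating set is optimal if $k=\gamma_e(\Gamma)$. *)

theory Defs
  imports "HOL-Computational_Algebra.Primes"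
begin

text \<open>A finite simple graph is given by a vertex set V and an edge relation E (set of ordered
pairs, symmetric and irreflexive). The distance d(u,v) is the length of a shortest walk.\<close>

definition gdist :: "('a \<times> 'a) set \<Rightarrow> 'a \<Rightarrow> 'a \<Rightarrow> nat" where
  "gdist E u v = (LEAST n. (u, v) \<in> E ^^ n)"

definition cycle_V :: "nat \<Rightarrow> nat set" where
  "cycle_V m = {0..<m}"

definition cycle_E :: "nat \<Rightarrow> (nat \<times> nat) set" where
  "cycle_E m = {(u, v). u < m \<and> v < m \<and> (v = (u + 1) mod m \<or> u = (v + 1) mod m)}"

definition dominates :: "('a \<times> 'a) set \<Rightarrow> 'a \<Rightarrow> nat \<Rightarrow> 'a \<Rightarrow> bool" where
  "dominates E v l u \<longleftrightarrow> gdist E u v = l"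

definition ext_irr_dom :: "'a set \<Rightarrow> ('a \<times> 'a) set \<Rightarrow> nat \<Rightarrow> 'a set \<Rightarrow> ('a \<Rightarrow> nat) \<Rightarrow> bool" where
  "ext_irr_dom V E k S lam \<longleftrightarrow>
     S \<subseteq> V \<and> finite S \<and> card S = k \<and> inj_on lam S \<and> (\<exists>v\<in>S. lam v = 0) \<and>
     (\<forall>u\<in>V. \<exists>v\<in>S. dominates E v (lam v) u)"

definition gamma_e :: "'a set \<Rightarrow> ('a \<times> 'a) set \<Rightarrow> nat" where
  "gamma_e V E = (LEAST k. \<exists>S lam. ext_irr_dom V E k S lam)"

definition optimal_ext_irr_dom :: "'a set \<Rightarrow> ('a \<times> 'a) set \<Rightarrow> 'a set \<Rightarrow> ('a \<Rightarrow> nat) \<Rightarrow> bool" where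
  "optimal_ext_irr_dom V E S lam \<longleftrightarrow> ext_irr_dom V E (gamma_e V E) S lam"

end

theory Submission
  imports Defs "HOL-Number_Theory.Euler_Criterion"
begin

(*
  Identify the vertices of C_{2p} with Z/2pZ; a centre c with label l, 2l <= 2p, dominates
  exactly c + l and c - l.  As gamma_e is a least element, any extended irregular dominating
  set yields an optimal one, so it suffices to place the labels 0, ..., p.

  Choose a quadratic nonresidue m, m /= -1 mod p, and alpha with (1 - m) alpha = 1, so that
  alpha - 1 = m alpha: for p not dividing l, alpha l and (alpha - 1) l have opposite quadratic
  characters.  Put beta = 2 alpha - 1, a unit mod 2p.  A label l in 1..p-1 with
  (alpha l / p) = 1 sits at beta l and dominates the even vertices 2 alpha l and
  2 (alpha - 1) l; one with (alpha l / p) = -1 sits at -beta (l + 1) and dominates the odd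
  vertices -beta - 2 alpha l and -beta - 2 (alpha - 1) l.  Every w prime to p is alpha l or
  (alpha - 1) l for an l of either prescribed character, so all vertices 2w and -beta - 2w
  are dominated except 0 and -beta, which are left to the labels 0 and p.  Distinct labels
  get distinct centres because beta is a unit.
*)

lemma cycle_E_imp_cong:
  assumes "(u, v) \<in> cycle_E n"
  shows "[int v = int u + 1] (mod int n) \<or> [int v = int u - 1] (mod int n)"
proof -
  have "v = (u + 1) mod n \<or> u = (v + 1) mod n"
    using assms by (simp add: cycle_E_def)
  then have "[v = u + 1] (mod n) \<or> [u = v + 1] (mod n)"
    using assms by (auto simp: cycle_E_def cong_def)
  then show ?thesis
    by (metis add_diff_cancel_right' cong_diff cong_int_iff cong_refl cong_sym of_nat_1 of_nat_add)
qed

lemma cycle_walk_displacement: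
  assumes "(u, v) \<in> cycle_E n ^^ k"
  shows "\<exists>s. \<bar>s\<bar> \<le> int k \<and> [int v = int u + s] (mod int n)"
  using assms
proof (induction k arbitrary: v)
  case 0
  then show ?case by auto
next
  case (Suc k)
  then obtain w where "(u, w) \<in> cycle_E n ^^ k" and step: "(w, v) \<in> cycle_E n"
    by auto
  with Suc.IH obtain s where s: "\<bar>s\<bar> \<le> int k" "[int w = int u + s] (mod int n)"
    by blast
  from cycle_E_imp_cong[OF step] show ?case
  proof
    assume "[int v = int w + 1] (mod int n)"
    then have "[int v = int u + (s + 1)] (mod int n)"
      using s(2) by (metis add.assoc cong_add_rcancel cong_trans)
    then show ?thesis using s(1) by (intro exI[of _ "s + 1"]) auto
  next
    assume "[int v = int w - 1] (mod int n)"
    then have "[int v = int u + (s - 1)] (mod int n)"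
      using s(2) by (metis add_diff_eq cong_diff cong_refl cong_trans)
    then show ?thesis using s(1) by (intro exI[of _ "s - 1"]) auto
  qed
qed

lemma cycle_walk_forward:
  assumes "u < n"
  shows "(u, (u + k) mod n) \<in> cycle_E n ^^ k"
proof (induction k)
  case 0
  then show ?case using assms by simp
next
  case (Suc k)
  have "((u + k) mod n, (u + Suc k) mod n) \<in> cycle_E n"
    using assms by (auto simp: cycle_E_def mod_Suc_eq)
  with Suc show ?case by auto
qed

lemma cycle_walk_backward:
  assumes "v < n"
  shows "((v + k) mod n, v) \<in> cycle_E n ^^ k"
proof (induction k)
  case 0
  then show ?case using assms by simp
next
  case (Suc k)
  have "((v + Suc k) mod n, (v + k) mod n) \<in> cycle_E n"
    using assms by (auto simp: cycle_E_def mod_Suc_eq)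
  with Suc show ?case by (meson relpow_Suc_I2)
qed

lemma gdist_cycle_eq:
  assumes "u < n" "v < n" "2 * l \<le> n"
    and "[int v = int u + int l] (mod int n) \<or> [int v = int u - int l] (mod int n)"
  shows "gdist (cycle_E n) u v = l"
  unfolding gdist_def
proof (rule Least_equality)
  from assms(4) show "(u, v) \<in> cycle_E n ^^ l"
  proof
    assume "[int v = int u + int l] (mod int n)"
    then have "v = (u + l) mod n"
      using assms(2) by (simp add: cong_def flip: of_nat_add of_nat_mod)
    then show ?thesis using cycle_walk_forward[OF assms(1)] by simp
  next
    assume "[int v = int u - int l] (mod int n)"
    then have "[int u = int v + int l] (mod int n)"
      by (metis cong_add_rcancel cong_sym diff_add_cancel)
    then have "u = (v + l) mod n"
      using assms(1) by (simp add: cong_def flip: of_nat_add of_nat_mod)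
    then show ?thesis using cycle_walk_backward[OF assms(2)] by simp
  qed
next
  fix k
  assume "(u, v) \<in> cycle_E n ^^ k"
  then obtain s where s: "\<bar>s\<bar> \<le> int k" "[int v = int u + s] (mod int n)"
    using cycle_walk_displacement by blast
  show "l \<le> k"
  proof (rule ccontr)
    assume "\<not> l \<le> k"
    then have "\<bar>s\<bar> < int l" using s(1) by linarith
    moreover have "[int u + s = int u + int l] (mod int n) \<or> [int u + s = int u - int l] (mod int n)"
      using assms(4) s(2) cong_sym cong_trans by blast
    then have "int n dvd s - int l \<or> int n dvd s + int l"
      by (auto simp: cong_iff_dvd_diff algebra_simps)
    moreover have "s - int l \<noteq> 0" "s + int l \<noteq> 0" "\<bar>s - int l\<bar> < int n" "\<bar>s + int l\<bar> < int n"
      using \<open>\<bar>s\<bar> < int l\<close> assms(3) by linarith+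
    ultimately show False
      by (metis dvd_imp_le_int abs_of_nat not_le)
  qed
qed

lemma ext_irr_dom_of_labelling:
  assumes "inj_on c {0..n}" "c ` {0..n} \<subseteq> V"
    and "\<And>u. u \<in> V \<Longrightarrow> \<exists>l\<le>n. dominates E (c l) l u"
  shows "ext_irr_dom V E (Suc n) (c ` {0..n}) (inv_into {0..n} c)"
proof -
  have label: "inv_into {0..n} c (c l) = l" if "l \<le> n" for l
    using assms(1) that by simp
  show ?thesis
    unfolding ext_irr_dom_def
  proof (intro conjI ballI)
    show "card (c ` {0..n}) = Suc n"
      using assms(1) by (simp add: card_image)
    show "\<exists>v\<in>c ` {0..n}. inv_into {0..n} c v = 0"
      using label[of 0] by force
    fix u
    assume "u \<in> V"
    then obtain l where "l \<le> n" "dominates E (c l) l u"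
      using assms(3) by blast
    then show "\<exists>v\<in>c ` {0..n}. dominates E v (inv_into {0..n} c v) u"
      using label by force
  qed (use assms(2) in \<open>auto intro: inj_on_inv_into\<close>)
qed

lemma optimal_ext_irr_dom_exists:
  assumes "ext_irr_dom V E k S lam"
  shows "\<exists>S lam. optimal_ext_irr_dom V E S lam"
  unfolding optimal_ext_irr_dom_def gamma_e_def
  using LeastI_ex[of "\<lambda>k. \<exists>S lam. ext_irr_dom V E k S lam"] assms by blast

lemma Legendre_cong:
  assumes "[x = y] (mod p)"
  shows "Legendre x p = Legendre y p"
proof -
  have "[x = 0] (mod p) \<longleftrightarrow> [y = 0] (mod p)" and "[z = x] (mod p) \<longleftrightarrow> [z = y] (mod p)" for z
    using assms cong_sym cong_trans by blast+
  then show ?thesis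
    by (simp add: Legendre_def QuadRes_def)
qed

lemma Legendre_eq_0_iff: "Legendre x p = 0 \<longleftrightarrow> p dvd x"
  by (simp add: Legendre_def cong_0_iff)

lemma Legendre_one:
  assumes "p > 1"
  shows "Legendre 1 p = 1"
proof -
  have "QuadRes p 1"
    unfolding QuadRes_def by (auto intro: exI[of _ 1])
  with assms show ?thesis
    by (simp add: Legendre_def cong_0_iff zdvd_not_zless)
qed

lemma Legendre_mult:
  assumes "prime p" "2 < p"
  shows "Legendre (x * y) (int p) = Legendre x (int p) * Legendre y (int p)"
proof -
  let ?e = "(p - 1) div 2"
  have "[Legendre (x * y) (int p) = x ^ ?e * y ^ ?e] (mod int p)"
    using euler_criterion[OF assms, of "x * y"] by (simp only: power_mult_distrib)
  moreover have "[x ^ ?e * y ^ ?e = Legendre x (int p) * Legendre y (int p)] (mod int p)"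
    using euler_criterion[OF assms] by (blast intro: cong_mult cong_sym)
  ultimately have "int p dvd Legendre (x * y) (int p) - Legendre x (int p) * Legendre y (int p)"
    using cong_iff_dvd_diff cong_trans by blast
  moreover have "\<bar>Legendre (x * y) (int p) - Legendre x (int p) * Legendre y (int p)\<bar> < int p"
    using assms(2) by (auto simp: Legendre_def)
  ultimately show ?thesis
    by (metis abs_of_nat dvd_imp_le_int eq_iff_diff_eq_0 not_le)
qed

lemma nonresidue_exists:
  assumes "prime p" "2 < p"
  obtains m where "Legendre m (int p) = -1"
proof -
  let ?sq = "\<lambda>x. x\<^sup>2 mod int p"
  have sq_last: "?sq (int p - 1) = ?sq 1"
  proof -
    have "(int p - 1)\<^sup>2 = 1 + int p * (int p - 2)"
      by (simp add: power2_eq_square algebra_simps)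
    then show ?thesis by simp
  qed
  have "{1..int p - 1} \<subseteq> ?sq ` {1..int p - 2}" if all_residues: "\<forall>y. Legendre y (int p) \<noteq> -1"
  proof
    fix y
    assume y: "y \<in> {1..int p - 1}"
    then have "\<not> int p dvd y"
      by (auto simp: zdvd_not_zless)
    then have "QuadRes (int p) y"
      using all_residues[rule_format, of y] by (auto simp: Legendre_def cong_0_iff split: if_splits)
    then obtain z where "[z\<^sup>2 = y] (mod int p)"
      unfolding QuadRes_def by blast
    define x where "x = z mod int p"
    have y_sq: "y = ?sq x"
      using y \<open>[z\<^sup>2 = y] (mod int p)\<close> by (simp add: x_def cong_def power_mod)
    have "x \<noteq> 0"
      using y y_sq by auto
    moreover have "0 \<le> x" "x < int p"
      using assms(2) by (simp_all add: x_def)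
    ultimately show "y \<in> ?sq ` {1..int p - 2}"
      using y_sq sq_last assms(2)
      by (cases "x = int p - 1") (auto intro: image_eqI[of _ _ 1] image_eqI[of _ _ x])
  qed
  moreover have "card (?sq ` {1..int p - 2}) < card {1..int p - 1}"
    using card_image_le[of "{1..int p - 2}" ?sq] assms(2) by simp
  ultimately show ?thesis
    using that by (meson card_mono finite_imageI finite_atLeastAtMost_int not_le)
qed

lemma nonresidue_exists_not_minus_one:
  assumes "prime p" "5 \<le> p"
  obtains m where "Legendre m (int p) = -1" "\<not> [m = -1] (mod int p)"
proof -
  have "2 < p"
    using assms(2) by simp
  then obtain m where m: "Legendre m (int p) = -1"
    using nonresidue_exists assms(1) by blast
  have "Legendre 4 (int p) = 1"
  proof -
    have "QuadRes (int p) 4"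
      unfolding QuadRes_def by (auto intro: exI[of _ 2])
    moreover have "\<not> int p dvd 4"
      using assms(2) by (auto simp: zdvd_not_zless)
    ultimately show ?thesis
      by (simp add: Legendre_def cong_0_iff)
  qed
  then have "Legendre (4 * m) (int p) = -1"
    using Legendre_mult[OF assms(1) \<open>2 < p\<close>, of 4 m] m by simp
  moreover have "\<not> [4 * m = -1] (mod int p)" if "[m = -1] (mod int p)"
  proof
    assume "[4 * m = -1] (mod int p)"
    moreover have "[4 * m = -4] (mod int p)"
      using cong_scalar_left[OF that, of 4] by simp
    ultimately have "[-1 = -4] (mod int p)"
      by (metis cong_sym cong_trans)
    then have "int p dvd 3"
      by (simp add: cong_iff_dvd_diff)
    then show False
      using assms(2) by (auto simp: zdvd_not_zless)
  qed
  ultimately show ?thesis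
    using that m by blast
qed

lemma cong_solve_nonzero:
  assumes "prime p" "\<not> int p dvd c" "\<not> int p dvd z"
  obtains l where "0 < l" "l < p" "[c * int l = z] (mod int p)"
proof -
  have "coprime c (int p)"
    using assms(1,2) prime_imp_coprime[of "int p" c] by (simp add: coprime_commute)
  then obtain x where x: "[c * x = 1] (mod int p)"
    using cong_solve_coprime_int by blast
  define l where "l = nat ((z * x) mod int p)"
  have p_pos: "0 < int p"
    using assms(1) prime_gt_0_nat by simp
  then have l: "int l = (z * x) mod int p" "l < p"
    by (simp_all add: l_def nat_less_iff)
  have "[c * int l = c * (z * x)] (mod int p)"
    unfolding l(1) by (simp add: cong_mult cong_mod_left)
  also have "[c * (z * x) = z * 1] (mod int p)"
    using cong_scalar_left[OF x, of z] by (simp add: ac_simps)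
  finally have "[c * int l = z] (mod int p)"
    by simp
  moreover have "l \<noteq> 0"
  proof
    assume "l = 0"
    with calculation have "[z = 0] (mod int p)"
      by (simp add: cong_sym_eq)
    with assms(3) show False
      by (simp add: cong_0_iff)
  qed
  ultimately show ?thesis
    using that l(2) by simp
qed

lemma nonresidue_complement_invertible:
  assumes "prime p" "2 < p" "Legendre m (int p) = -1"
  obtains \<alpha> where "[(1 - m) * \<alpha> = 1] (mod int p)"
proof -
  have "\<not> int p dvd 1 - m"
  proof
    assume "int p dvd 1 - m"
    then have "Legendre m (int p) = Legendre 1 (int p)"
      by (intro Legendre_cong) (simp add: cong_iff_dvd_diff dvd_diff_commute)
    then show False
      using assms Legendre_one[of "int p"] by simp
  qed
  then have "coprime (1 - m) (int p)"
    using assms(1) prime_imp_coprime[of "int p" "1 - m"] by (simp add: coprime_commute)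
  then show ?thesis
    using that cong_solve_coprime_int by blast
qed

locale cycle_double_prime_labelling =
  fixes p :: nat and m \<alpha> :: int
  assumes prime: "prime p" and p_gt_2: "2 < p"
    and nonresidue: "Legendre m (int p) = -1"
    and m_not_minus_one: "\<not> [m = -1] (mod int p)"
    and alpha: "[(1 - m) * \<alpha> = 1] (mod int p)"
begin

definition \<beta> :: int where
  "\<beta> = 2 * \<alpha> - 1"

(* Labels 0 and p dominate only the vertices 0 and -beta, in either order.  Label p must be
   even exactly when p - 1 is, since beta (p - 1) = - beta (p + 1) mod 2p. *)
definition even_label :: "nat \<Rightarrow> bool" where
  "even_label l \<longleftrightarrow>
     (if l = 0 then Legendre (\<alpha> * (int p - 1)) (int p) \<noteq> 1
      else if l = p then Legendre (\<alpha> * (int p - 1)) (int p) = 1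
      else Legendre (\<alpha> * int l) (int p) = 1)"

definition centre :: "nat \<Rightarrow> int" where
  "centre l = (if even_label l then \<beta> * int l else - \<beta> * (int l + 1))"

definition centre_vertex :: "nat \<Rightarrow> nat" where
  "centre_vertex l = nat (centre l mod (2 * int p))"

lemma alpha_pred: "[\<alpha> - 1 = m * \<alpha>] (mod int p)"
  using alpha by (simp add: cong_iff_dvd_diff algebra_simps)

lemma not_dvd_m: "\<not> int p dvd m"
  using nonresidue by (auto simp: Legendre_eq_0_iff[symmetric])

lemma not_dvd_alpha: "\<not> int p dvd \<alpha>"
proof -
  have "coprime \<alpha> (int p)"
    using alpha coprime_iff_invertible_int[of \<alpha>] by (metis mult.commute)
  then show ?thesis
    using coprime_common_divisor_int[of \<alpha> "int p" "int p"] p_gt_2 by auto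
qed

lemma not_dvd_alpha_pred: "\<not> int p dvd \<alpha> - 1"
proof
  assume "int p dvd \<alpha> - 1"
  then have "int p dvd m * \<alpha>"
    using alpha_pred cong_dvd_iff by blast
  then show False
    using not_dvd_m not_dvd_alpha prime prime_dvd_mult_iff[of "int p" m \<alpha>] by simp
qed

lemma coprime_beta: "coprime \<beta> (2 * int p)"
proof -
  have "[(1 - m) * \<beta> = 1 + m] (mod int p)"
    using cong_scalar_left[OF alpha, of 2] by (simp add: \<beta>_def cong_iff_dvd_diff algebra_simps)
  moreover have "\<not> int p dvd 1 + m"
    using m_not_minus_one by (simp add: cong_iff_dvd_diff add.commute)
  ultimately have "\<not> int p dvd \<beta>"
    using cong_dvd_iff dvd_mult by blast
  then have "coprime \<beta> (int p)"
    using prime prime_imp_coprime[of "int p" \<beta>] by (simp add: coprime_commute)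
  moreover have "coprime \<beta> 2"
    by (simp add: \<beta>_def)
  ultimately show ?thesis
    by simp
qed

lemma even_label_iff:
  "0 < l \<Longrightarrow> l < p \<Longrightarrow> even_label l \<longleftrightarrow> Legendre (\<alpha> * int l) (int p) = 1"
  by (simp add: even_label_def)

lemma even_label_last: "even_label p \<longleftrightarrow> even_label (p - 1)"
  using p_gt_2 by (simp add: even_label_def of_nat_diff)

lemma even_label_0: "even_label 0 \<longleftrightarrow> \<not> even_label p"
  using p_gt_2 by (simp add: even_label_def)

lemma centre_vertex_lt: "centre_vertex l < 2 * p"
  using p_gt_2 by (simp add: centre_vertex_def nat_less_iff)

lemma centre_vertex_cong: "[int (centre_vertex l) = centre l] (mod 2 * int p)"
  using p_gt_2 by (simp add: centre_vertex_def cong_def)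

lemma centre_even_odd_not_cong:
  assumes "l1 \<le> p" "l2 \<le> p" "even_label l1" "\<not> even_label l2"
  shows "\<not> [\<beta> * int l1 = - \<beta> * (int l2 + 1)] (mod 2 * int p)"
proof
  assume "[\<beta> * int l1 = - \<beta> * (int l2 + 1)] (mod 2 * int p)"
  then have "2 * int p dvd \<beta> * (int l1 + int l2 + 1)"
    by (simp add: cong_iff_dvd_diff algebra_simps)
  then have "2 * int p dvd int l1 + int l2 + 1"
    using coprime_dvd_mult_right_iff coprime_beta coprime_commute by blast
  then obtain k where k: "int l1 + int l2 + 1 = 2 * int p * k"
    by blast
  have "0 < 2 * int p * k" "2 * int p * k < 2 * int p * 2"
    using k assms(1,2) p_gt_2 by linarith+
  then have "0 < k" "k < 2"
    using p_gt_2 by (simp_all add: zero_less_mult_iff mult_less_cancel_left_pos)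
  then have "k = 1"
    by simp
  with k have "int (l1 + l2 + 1) = int (2 * p)"
    by simp
  then have "l1 + l2 + 1 = 2 * p"
    by (simp only: of_nat_eq_iff)
  then have "{l1, l2} = {p - 1, p}"
    using assms(1,2) by auto
  then show False
    using assms(3,4) even_label_last by (auto simp: doubleton_eq_iff)
qed

lemma inj_centre_vertex: "inj_on centre_vertex {0..p}"
proof (rule inj_onI)
  fix l1 l2
  assume l: "l1 \<in> {0..p}" "l2 \<in> {0..p}" and "centre_vertex l1 = centre_vertex l2"
  then have "[centre l1 = centre l2] (mod 2 * int p)"
    by (metis centre_vertex_cong cong_sym cong_trans)
  then have "[int l1 = int l2] (mod 2 * int p)"
    using centre_even_odd_not_cong[of l1 l2] centre_even_odd_not_cong[of l2 l1] l
    by (auto simp: centre_def cong_mult_lcancel[OF coprime_beta] cong_sym_eq cong_minus_minus_iff cong_add_rcancel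
        split: if_splits)
  then show "l1 = l2"
    using l p_gt_2 by (simp add: cong_def)
qed

lemma beta_times_endpoint:
  assumes "l = 0 \<or> l = p"
  shows "[\<beta> * int l = int l] (mod 2 * int p)"
proof -
  have "\<beta> * int p - int p = 2 * int p * (\<alpha> - 1)"
    by (simp add: \<beta>_def algebra_simps)
  then show ?thesis
    using assms by (auto simp: cong_iff_dvd_diff)
qed

lemma exists_label_with_character:
  assumes "\<not> int p dvd w" "\<epsilon> = 1 \<or> \<epsilon> = -1"
  obtains l where "0 < l" "l < p" "Legendre (\<alpha> * int l) (int p) = \<epsilon>"
    and "[2 * (\<alpha> * int l) = 2 * w] (mod 2 * int p) \<or> [2 * ((\<alpha> - 1) * int l) = 2 * w] (mod 2 * int p)"
proof -
  have "Legendre w (int p) = \<epsilon> \<or> Legendre w (int p) = - \<epsilon>"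
    using assms Legendre_eq_0_iff[of w "int p"] by (auto simp: Legendre_def)
  then show ?thesis
  proof
    assume w: "Legendre w (int p) = \<epsilon>"
    obtain l where l: "0 < l" "l < p" "[\<alpha> * int l = w] (mod int p)"
      using cong_solve_nonzero[OF prime not_dvd_alpha assms(1)] .
    moreover have "Legendre (\<alpha> * int l) (int p) = \<epsilon>"
      using w Legendre_cong[OF l(3)] by simp
    ultimately show ?thesis
      using that cong_cmult_leftI by blast
  next
    assume w: "Legendre w (int p) = - \<epsilon>"
    obtain l where l: "0 < l" "l < p" "[(\<alpha> - 1) * int l = w] (mod int p)"
      using cong_solve_nonzero[OF prime not_dvd_alpha_pred assms(1)] .
    have "[m * (\<alpha> * int l) = w] (mod int p)"
      using cong_trans[OF cong_sym[OF cong_scalar_right[OF alpha_pred]] l(3)] by (simp add: mult.assoc)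
    then have "Legendre m (int p) * Legendre (\<alpha> * int l) (int p) = - \<epsilon>"
      using w Legendre_cong Legendre_mult[OF prime p_gt_2] by metis
    then have "Legendre (\<alpha> * int l) (int p) = \<epsilon>"
      using nonresidue by simp
    then show ?thesis
      using that l cong_cmult_leftI by blast
  qed
qed

lemma centre_covers_even:
  assumes "even u" "u < 2 * p"
  shows "\<exists>l\<le>p. [centre l = int u + int l] (mod 2 * int p) \<or> [centre l = int u - int l] (mod 2 * int p)"
proof (cases "u = 0")
  case True
  define l where "l = (if even_label 0 then 0 else p)"
  have "even_label l" "l = 0 \<or> l = p"
    using even_label_0 by (auto simp: l_def)
  then have "[centre l = int u + int l] (mod 2 * int p)"
    using beta_times_endpoint True by (simp add: centre_def)
  then show ?thesis
    using \<open>l = 0 \<or> l = p\<close> by auto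
next
  case False
  define w where "w = int u div 2"
  have u: "int u = 2 * w"
    using assms(1) by (simp add: w_def)
  have "\<not> int p dvd w"
    using False assms(2) u by (auto simp: zdvd_not_zless)
  then obtain l where l: "0 < l" "l < p" "Legendre (\<alpha> * int l) (int p) = 1"
    and cong: "[2 * (\<alpha> * int l) = 2 * w] (mod 2 * int p) \<or> [2 * ((\<alpha> - 1) * int l) = 2 * w] (mod 2 * int p)"
    using exists_label_with_character by blast
  have "centre l = 2 * (\<alpha> * int l) - int l" "centre l = 2 * ((\<alpha> - 1) * int l) + int l"
    using l even_label_iff by (simp_all add: centre_def \<beta>_def algebra_simps)
  then have "[centre l = int u - int l] (mod 2 * int p) \<or> [centre l = int u + int l] (mod 2 * int p)"
    using cong u by (metis cong_add cong_diff cong_refl)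
  then show ?thesis
    using l(2) less_imp_le by blast
qed

lemma centre_covers_odd:
  assumes "odd u" "u < 2 * p"
  shows "\<exists>l\<le>p. [centre l = int u + int l] (mod 2 * int p) \<or> [centre l = int u - int l] (mod 2 * int p)"
proof -
  define w where "w = (- \<beta> - int u) div 2"
  have u: "int u = - \<beta> - 2 * w"
    using assms(1) by (simp add: w_def \<beta>_def)
  show ?thesis
  proof (cases "int p dvd w")
    case True
    define l where "l = (if even_label 0 then p else 0)"
    have "\<not> even_label l" "l = 0 \<or> l = p"
      using even_label_0 by (auto simp: l_def)
    moreover have "[int u = - \<beta>] (mod 2 * int p)"
      using True u by (simp add: cong_iff_dvd_diff)
    moreover have "[- \<beta> - \<beta> * int l = - \<beta> - int l] (mod 2 * int p)"
      using cong_diff[OF cong_refl beta_times_endpoint] \<open>l = 0 \<or> l = p\<close> by blast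
    ultimately have "[centre l = int u - int l] (mod 2 * int p)"
      by (simp add: centre_def algebra_simps) (metis cong_diff cong_refl cong_sym cong_trans)
    then show ?thesis
      using \<open>l = 0 \<or> l = p\<close> by auto
  next
    case False
    then obtain l where l: "0 < l" "l < p" "Legendre (\<alpha> * int l) (int p) = -1"
      and cong: "[2 * (\<alpha> * int l) = 2 * w] (mod 2 * int p) \<or> [2 * ((\<alpha> - 1) * int l) = 2 * w] (mod 2 * int p)"
      using exists_label_with_character by blast
    have "centre l = (- \<beta> - 2 * (\<alpha> * int l)) + int l" "centre l = (- \<beta> - 2 * ((\<alpha> - 1) * int l)) - int l"
      using l even_label_iff by (simp_all add: centre_def \<beta>_def algebra_simps)
    then have "[centre l = int u + int l] (mod 2 * int p) \<or> [centre l = int u - int l] (mod 2 * int p)"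
      using cong u by (metis cong_add cong_diff cong_refl)
    then show ?thesis
      using l(2) less_imp_le by blast
  qed
qed

theorem ext_irr_dom_cycle:
  "ext_irr_dom (cycle_V (2 * p)) (cycle_E (2 * p)) (Suc p)
     (centre_vertex ` {0..p}) (inv_into {0..p} centre_vertex)"
proof (rule ext_irr_dom_of_labelling)
  show "inj_on centre_vertex {0..p}"
    by (rule inj_centre_vertex)
  show "centre_vertex ` {0..p} \<subseteq> cycle_V (2 * p)"
    using centre_vertex_lt by (auto simp: cycle_V_def)
  fix u
  assume "u \<in> cycle_V (2 * p)"
  then have u: "u < 2 * p"
    by (simp add: cycle_V_def)
  then obtain l where l: "l \<le> p"
    "[centre l = int u + int l] (mod 2 * int p) \<or> [centre l = int u - int l] (mod 2 * int p)"
    using centre_covers_even centre_covers_odd by blast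
  then have "[int (centre_vertex l) = int u + int l] (mod int (2 * p)) \<or>
      [int (centre_vertex l) = int u - int l] (mod int (2 * p))"
    using l(2) cong_trans[OF centre_vertex_cong[of l]] by auto
  then have "gdist (cycle_E (2 * p)) u (centre_vertex l) = l"
    using gdist_cycle_eq[OF u centre_vertex_lt] l(1) by simp
  then show "\<exists>l\<le>p. dominates (cycle_E (2 * p)) (centre_vertex l) l u"
    using l(1) by (auto simp: dominates_def)
qed

end

theorem corollary4p9:
  fixes p :: nat
  assumes "prime p" and "p \<ge> 7"
  shows "\<exists>S lam. optimal_ext_irr_dom (cycle_V (2 * p)) (cycle_E (2 * p)) S lam"
proof -
  have "5 \<le> p" "2 < p"
    using assms(2) by simp_all
  obtain m where m: "Legendre m (int p) = -1" "\<not> [m = -1] (mod int p)"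
    using nonresidue_exists_not_minus_one[OF assms(1) \<open>5 \<le> p\<close>] by blast
  moreover obtain \<alpha> where "[(1 - m) * \<alpha> = 1] (mod int p)"
    using nonresidue_complement_invertible[OF assms(1) \<open>2 < p\<close> m(1)] by blast
  ultimately interpret cycle_double_prime_labelling p m \<alpha>
    using assms(1) \<open>2 < p\<close> by unfold_locales
  show ?thesis
    using optimal_ext_irr_dom_exists ext_irr_dom_cycle by blast
qed

end
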